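(* Let $k\le l$ be positive integers with $\gcd(k,l)=1$, let $n\ge 1$ and $m\ge 0$ be integers, and write $m=qn+r$ with integers $q\ge 0$ and $0\le r<n$. Let $S$ be the minimum of $x+y$ over all integers $x,y$ satisfying $$qxy+r(xl+yk)\ge klnr,\qquad x\ge rk,\qquad y\ge rl.$$ Then $$L^{k,l}(m,n)=nkq+\min(nk,\,S).$$
   Context: $\mathcal D^{k,l}(m,n)$ denotes the set of all $nk\times nl$ matrices with nonnegative integer entries all of whose row sums equal $ml$ and all of whose column sums equal $mk$. For an $s\times t$ matrix $A=(a_{ij})$ with $s\le t$, a transversal of $A$ is a set of entries $T=\{a_{1i_1},\dots,a_{si_s}\}$ taken from distinct columns (i.e. $i_1,\dots,i_s\in\{1,\dots,t\}$ pairwise distinct), and $|T|=a_{1i_1}+\cdots+a_{si_s}$; if $s>t$, the transversals of $A$ are defined to be those of its transpose. The tropical determinant is ${\rm tdet}(A)=\max_T |T|$ over all transversals $T$ of $A$. Finally $L^{k,l}(m,n)=\min_{A\in\mathcal D^{k,l}(m,n)}{\rm tdet}(A)$. *)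

theory Defs
  imports Main
begin

text \<open>Matrices are functions nat => nat => nat; an s x t matrix uses indices i < s, j < t.
  Entries outside the range are required to be 0 in D so that the set is finite.\<close>

definition tdet :: "nat \<Rightarrow> nat \<Rightarrow> (nat \<Rightarrow> nat \<Rightarrow> nat) \<Rightarrow> nat" where
  "tdet s t A =
    (if s \<le> t then
       Max {(\<Sum>i<s. A i (f i)) | f. inj_on f {..<s} \<and> f ` {..<s} \<subseteq> {..<t}}
     else
       Max {(\<Sum>j<t. A (g j) j) | g. inj_on g {..<t} \<and> g ` {..<t} \<subseteq> {..<s}})"

definition Dset :: "nat \<Rightarrow> nat \<Rightarrow> nat \<Rightarrow> nat \<Rightarrow> (nat \<Rightarrow> nat \<Rightarrow> nat) set" where
  "Dset k l m n =
    {A. (\<forall>i j. (i \<ge> n * k \<or> j \<ge> n * l) \<longrightarrow> A i j = 0)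
      \<and> (\<forall>i < n * k. (\<Sum>j < n * l. A i j) = m * l)
      \<and> (\<forall>j < n * l. (\<Sum>i < n * k. A i j) = m * k)}"

definition Lkl :: "nat \<Rightarrow> nat \<Rightarrow> nat \<Rightarrow> nat \<Rightarrow> nat" where
  "Lkl k l m n = Min (tdet (n * k) (n * l) ` Dset k l m n)"

end

theory Submission
  imports Defs "HOL-Library.FuncSet"
begin

text \<open>
  Pad \<open>A \<in> D\<close> with zero rows to a square \<open>nl \<times> nl\<close> matrix. By Egervary's
  theorem (derived from Hall's theorem) some transversal of \<open>A\<close> has the weight of a cover
  \<open>a\<^sub>i\<^sub>j \<le> u\<^sub>i + v\<^sub>j\<close>. Normalise the cover to \<open>a\<^sub>i\<^sub>j \<le> q + \<alpha>\<^sub>i + \<beta>\<^sub>j\<close> with \<open>\<beta> \<ge> 0\<close> and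
  some \<open>\<beta>\<^sub>j = 0\<close>. A row with \<open>\<alpha>\<^sub>i < 0\<close> forces \<open>\<Sum>\<beta> \<ge> nl\<close> by its row sum, and if all
  \<open>\<alpha>\<^sub>i \<ge> 1\<close> then \<open>\<Sum>\<alpha> \<ge> nk\<close>. Otherwise rows and columns of weight zero span a block with
  entries at most \<open>q\<close>, and counting row and column sums through it shows that the numbers of
  rows and of columns of positive weight satisfy the constraints defining \<open>S\<close>.

  For a minimiser \<open>(x, y)\<close> with \<open>x + y < nk\<close>, deal the entries of each row
  cyclically into the first \<open>y\<close> and the last \<open>nl - y\<close> columns, giving the first \<open>x\<close> rows
  the slack of the quadratic constraint; the result lies in \<open>D\<close> and is covered by
  \<open>q + 1\<close> on the first \<open>x\<close> rows, \<open>q\<close> on the others and \<open>1\<close> on the first \<open>y\<close> columns.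
\<close>

section \<open>Cyclic dealing\<close>

definition wrap_count :: "nat \<Rightarrow> nat \<Rightarrow> nat \<Rightarrow> nat \<Rightarrow> nat" where
  "wrap_count P len w j = (\<Sum>t<len. if (P + t) mod w = j then 1 else 0)"

lemma wrap_count_add: "wrap_count P (a + b) w j = wrap_count P a w j + wrap_count (P + a) b w j"
  unfolding wrap_count_def by (induction b) (simp_all add: add.assoc)

lemma wrap_count_mono: "a \<le> b \<Longrightarrow> wrap_count P a w j \<le> wrap_count P b w j"
  using wrap_count_add[of P a "b - a" w j] by simp

lemma wrap_count_Suc_start: "wrap_count (Suc P) w w j = wrap_count P w w j"
proof -
  have "wrap_count P (Suc w) w j = wrap_count P w w j + (if (P + w) mod w = j then 1 else 0)"
    unfolding wrap_count_def by simp
  moreover have "wrap_count P (Suc w) w j = (if P mod w = j then 1 else 0) + wrap_count (Suc P) w w j"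
    unfolding wrap_count_def by (subst sum.lessThan_Suc_shift) simp
  ultimately show ?thesis by simp
qed

lemma wrap_count_period: "j < w \<Longrightarrow> wrap_count P w w j = 1"
proof (induction P)
  case 0
  have "wrap_count 0 w w j = (\<Sum>t<w. if t = j then 1 else 0)"
    unfolding wrap_count_def by (intro sum.cong) auto
  with 0 show ?case by simp
next
  case (Suc P)
  then show ?case by (simp add: wrap_count_Suc_start)
qed

lemma wrap_count_periods: "j < w \<Longrightarrow> wrap_count P (c * w) w j = c"
proof (induction c arbitrary: P)
  case 0
  then show ?case by (simp add: wrap_count_def)
next
  case (Suc c)
  have "wrap_count P (w + c * w) w j = wrap_count P w w j + wrap_count (P + w) (c * w) w j"
    by (rule wrap_count_add)
  with Suc show ?case by (simp add: wrap_count_period)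
qed

lemma wrap_count_le: "0 < w \<Longrightarrow> len \<le> c * w \<Longrightarrow> wrap_count P len w j \<le> c"
proof (cases "j < w")
  case True
  assume "len \<le> c * w"
  then have "wrap_count P len w j \<le> wrap_count P (c * w) w j" by (rule wrap_count_mono)
  with True show ?thesis by (simp add: wrap_count_periods)
next
  case False
  assume "0 < w"
  with False have "wrap_count P len w j = 0"
    unfolding wrap_count_def by (intro sum.neutral) auto
  then show ?thesis by simp
qed

lemma sum_wrap_count: "0 < w \<Longrightarrow> (\<Sum>j<w. wrap_count P len w j) = len"
  unfolding wrap_count_def by (subst sum.swap) simp

definition prefix_sum :: "(nat \<Rightarrow> nat) \<Rightarrow> nat \<Rightarrow> nat" where
  "prefix_sum \<rho> i = (\<Sum>i'<i. \<rho> i')"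

lemma sum_wrap_count_prefix_sum:
  "(\<Sum>i<s. wrap_count (prefix_sum \<rho> i) (\<rho> i) w j) = wrap_count 0 (\<Sum>i<s. \<rho> i) w j"
proof (induction s)
  case 0
  then show ?case by (simp add: wrap_count_def)
next
  case (Suc s)
  then show ?case using wrap_count_add[of 0 "\<Sum>i<s. \<rho> i" "\<rho> s" w j]
    by (simp add: prefix_sum_def)
qed

definition balanced_part :: "nat \<Rightarrow> nat \<Rightarrow> nat \<Rightarrow> nat" where
  "balanced_part D x i = D div x + (if i < D mod x then 1 else 0)"

lemma sum_balanced_part: "0 < x \<Longrightarrow> (\<Sum>i<x. balanced_part D x i) = D"
proof -
  assume "0 < x"
  then have "{i. i < x \<and> i < D mod x} = {..<D mod x}"
    using mod_less_divisor[of x D] by (auto intro: less_trans)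
  then have "(\<Sum>i<x. if i < D mod x then 1 else 0 :: nat) = D mod x"
    by (simp add: sum.If_cases lessThan_def Int_def)
  then show ?thesis by (simp add: balanced_part_def sum.distrib)
qed

lemma balanced_part_le:
  assumes "i < x" "D \<le> x * a"
  shows "balanced_part D x i \<le> a"
proof (cases "i < D mod x")
  case True
  have "D div x < a"
  proof (rule ccontr)
    assume "\<not> D div x < a"
    then have "x * a \<le> x * (D div x)" by simp
    moreover have "x * (D div x) + D mod x = D" by simp
    ultimately show False using True assms(2) by linarith
  qed
  with True show ?thesis by (simp add: balanced_part_def)
next
  case False
  have "D div x \<le> a" using div_le_mono[OF assms(2), of x] assms(1) by simp
  with False show ?thesis by (simp add: balanced_part_def)
qed

lemma balanced_part_ge: "0 < x \<Longrightarrow> x * b \<le> D \<Longrightarrow> b \<le> balanced_part D x i"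
  using div_le_mono[of "x * b" D x] by (simp add: balanced_part_def)

lemma exists_balanced_loads:
  fixes D x a b :: nat
  assumes "x * b \<le> D" "D \<le> x * a"
  obtains \<rho> where "(\<Sum>i<x. \<rho> i) = D" "\<forall>i<x. b \<le> \<rho> i \<and> \<rho> i \<le> a"
proof (cases "x = 0")
  case True
  with assms that[of id] show ?thesis by simp
next
  case False
  with assms that[of "balanced_part D x"] show ?thesis
    by (simp add: sum_balanced_part balanced_part_le balanced_part_ge)
qed

section \<open>The theorems of Hall and Egervary\<close>

definition hall_condition :: "'a set \<Rightarrow> ('a \<Rightarrow> 'b set) \<Rightarrow> bool" where
  "hall_condition I S \<longleftrightarrow> (\<forall>J\<subseteq>I. card J \<le> card (\<Union> (S ` J)))"

lemma hall_condition_remove_critical: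
  assumes hall: "hall_condition I S" and "finite I" and finS: "\<forall>i\<in>I. finite (S i)"
    and J: "J \<subseteq> I" "card (\<Union> (S ` J)) = card J"
  shows "hall_condition (I - J) (\<lambda>i. S i - \<Union> (S ` J))"
  unfolding hall_condition_def
proof (intro allI impI)
  fix K assume K: "K \<subseteq> I - J"
  let ?U = "\<Union> (S ` J)" and ?V = "\<Union> ((\<lambda>i. S i - \<Union> (S ` J)) ` K)"
  have "finite K" using K \<open>finite I\<close> by (simp add: finite_subset)
  have "finite J" using J(1) \<open>finite I\<close> by (rule finite_subset)
  have "finite ?U" using \<open>finite J\<close> J(1) finS by blast
  have "finite ?V" using \<open>finite K\<close> K finS by blast
  have "card K + card J = card (K \<union> J)"
    using K by (intro card_Un_disjoint[symmetric] \<open>finite K\<close> \<open>finite J\<close>) blast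
  also have "\<dots> \<le> card (\<Union> (S ` (K \<union> J)))"
    using hall K J(1) unfolding hall_condition_def by (metis Diff_subset Un_least subset_trans)
  also have "\<Union> (S ` (K \<union> J)) = ?V \<union> ?U" by blast
  also have "card (?V \<union> ?U) = card ?V + card ?U"
    using \<open>finite ?U\<close> \<open>finite ?V\<close> by (intro card_Un_disjoint) blast+
  finally show "card K \<le> card ?V" using J(2) by linarith
qed

lemma hall_condition_remove_point:
  assumes hall: "hall_condition I S" and "finite I" and finS: "\<forall>i\<in>I. finite (S i)"
    and "i0 \<in> I"
    and no_critical: "\<forall>J. J \<subseteq> I \<and> J \<noteq> {} \<and> J \<noteq> I \<longrightarrow> card (\<Union> (S ` J)) \<noteq> card J"
  shows "hall_condition (I - {i0}) (\<lambda>i. S i - {e})"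
  unfolding hall_condition_def
proof (intro allI impI)
  fix K assume K: "K \<subseteq> I - {i0}"
  show "card K \<le> card (\<Union> ((\<lambda>i. S i - {e}) ` K))"
  proof (cases "K = {}")
    case False
    with K \<open>i0 \<in> I\<close> have "card (\<Union> (S ` K)) \<noteq> card K"
      using no_critical[rule_format, of K] by blast
    moreover have "card K \<le> card (\<Union> (S ` K))"
      using hall K unfolding hall_condition_def by blast
    moreover have "card (\<Union> (S ` K)) - 1 \<le> card (\<Union> (S ` K) - {e})"
      using diff_card_le_card_Diff[of "{e}" "\<Union> (S ` K)"] by simp
    ultimately have "card K \<le> card (\<Union> (S ` K) - {e})" by linarith
    moreover have "\<Union> ((\<lambda>i. S i - {e}) ` K) = \<Union> (S ` K) - {e}" by blast
    ultimately show ?thesis by simp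
  qed simp
qed

theorem hall_marriage:
  assumes "finite I" and "\<forall>i\<in>I. finite (S i)" and "hall_condition I S"
  shows "\<exists>f. inj_on f I \<and> (\<forall>i\<in>I. f i \<in> S i)"
  using assms
proof (induction "card I" arbitrary: I S rule: less_induct)
  case less
  note fin = less.prems(1) and finS = less.prems(2) and hall = less.prems(3)
  show ?case
  proof (cases "\<exists>J. J \<subseteq> I \<and> J \<noteq> {} \<and> J \<noteq> I \<and> card (\<Union> (S ` J)) = card J")
    case True
    then obtain J where J: "J \<subseteq> I" "J \<noteq> {}" "J \<noteq> I" "card (\<Union> (S ` J)) = card J" by blast
    let ?U = "\<Union> (S ` J)"
    have "finite J" using J(1) fin by (rule finite_subset)
    have "card J < card I" using J(1,3) fin by (meson psubsetI psubset_card_mono)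
    have "0 < card J" using J(2) \<open>finite J\<close> by (simp add: card_gt_0_iff)
    then have "card (I - J) < card I"
      using J(1) \<open>finite J\<close> \<open>card J < card I\<close> by (simp add: card_Diff_subset)
    have "hall_condition J S" using hall J(1) unfolding hall_condition_def by (meson subset_trans)
    moreover have "\<forall>i\<in>J. finite (S i)" using finS J(1) by blast
    ultimately obtain f1 where f1: "inj_on f1 J" "\<forall>i\<in>J. f1 i \<in> S i"
      using less.hyps[OF \<open>card J < card I\<close> \<open>finite J\<close>] by blast
    have "\<forall>i\<in>I - J. finite (S i - ?U)" using finS by blast
    then obtain f2 where f2: "inj_on f2 (I - J)" "\<forall>i\<in>I - J. f2 i \<in> S i - ?U"
      using less.hyps[OF \<open>card (I - J) < card I\<close> finite_Diff[OF fin]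
          _ hall_condition_remove_critical[OF hall fin finS J(1,4)]] by blast
    define f where "f i = (if i \<in> J then f1 i else f2 i)" for i
    have "inj_on f J" "inj_on f (I - J)"
      using f1(1) f2(1) by (auto simp: f_def inj_on_def)
    moreover have "f ` J \<subseteq> ?U" "f ` (I - J) \<inter> ?U = {}" using f1(2) f2(2) by (auto simp: f_def)
    ultimately have "inj_on f (J \<union> (I - J))" unfolding inj_on_Un by blast
    moreover have "J \<union> (I - J) = I" using J(1) by blast
    moreover have "\<forall>i\<in>I. f i \<in> S i" using f1(2) f2(2) by (auto simp: f_def)
    ultimately show ?thesis by auto
  next
    case no_critical: False
    show ?thesis
    proof (cases "I = {}")
      case False
      then obtain i0 where "i0 \<in> I" by blast
      with hall have "card {i0} \<le> card (\<Union> (S ` {i0}))" unfolding hall_condition_def by blast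
      then obtain e where e: "e \<in> S i0" by fastforce
      have "card (I - {i0}) < card I" using fin \<open>i0 \<in> I\<close> by (rule card_Diff1_less)
      moreover have "\<forall>i\<in>I - {i0}. finite (S i - {e})" using finS by blast
      ultimately obtain f where f: "inj_on f (I - {i0})" "\<forall>i\<in>I - {i0}. f i \<in> S i - {e}"
        using less.hyps[OF _ finite_Diff[OF fin] _ hall_condition_remove_point[OF hall fin finS \<open>i0 \<in> I\<close>]]
          no_critical by blast
      have "inj_on (f(i0 := e)) (insert i0 (I - {i0}))"
        using f by (auto simp: inj_on_def)
      moreover have "\<forall>i\<in>I. (f(i0 := e)) i \<in> S i" using f(2) e by auto
      ultimately show ?thesis using \<open>i0 \<in> I\<close> by (metis insert_Diff)
    qed simp
  qed
qed

definition covers :: "nat \<Rightarrow> (nat \<Rightarrow> nat \<Rightarrow> nat) \<Rightarrow> (nat \<Rightarrow> int) \<Rightarrow> (nat \<Rightarrow> int) \<Rightarrow> bool" where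
  "covers t a u v \<longleftrightarrow> (\<forall>i<t. \<forall>j<t. int (a i j) \<le> u i + v j)"

lemma cover_weight_nonneg:
  assumes "covers t a u v"
  shows "0 \<le> (\<Sum>i<t. u i) + (\<Sum>j<t. v j)"
proof -
  have "(0::int) \<le> (\<Sum>i<t. int (a i i))" by (simp add: sum_nonneg)
  also have "\<dots> \<le> (\<Sum>i<t. u i + v i)" using assms unfolding covers_def by (intro sum_mono) auto
  finally show ?thesis by (simp add: sum.distrib)
qed

lemma exists_minimum_cover:
  "\<exists>u v. covers t a u v \<and> (\<forall>u' v'. covers t a u' v' \<longrightarrow>
      (\<Sum>i<t. u i) + (\<Sum>j<t. v j) \<le> (\<Sum>i<t. u' i) + (\<Sum>j<t. v' j))"
proof -
  define weight where "weight = (\<lambda>(u, v). nat ((\<Sum>i<t. u i) + (\<Sum>j<t. v j)))"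
  have "covers t a (\<lambda>i. \<Sum>j<t. int (a i j)) (\<lambda>_. 0)"
    unfolding covers_def by (auto intro: member_le_sum)
  then obtain uv where uv: "covers t a (fst uv) (snd uv)"
    and min: "\<forall>uv'. covers t a (fst uv') (snd uv') \<longrightarrow> weight uv \<le> weight uv'"
    using ex_has_least_nat[where P = "\<lambda>uv. covers t a (fst uv) (snd uv)" and m = weight] by force
  have "(\<Sum>i<t. fst uv i) + (\<Sum>j<t. snd uv j) \<le> (\<Sum>i<t. u' i) + (\<Sum>j<t. v' j)"
    if "covers t a u' v'" for u' v'
    using min[rule_format, of "(u', v')"] that cover_weight_nonneg[OF that] cover_weight_nonneg[OF uv]
    by (auto simp: weight_def split: prod.splits)
  with uv show ?thesis by blast
qed

text \<open>Lowering the row weights on \<open>J\<close> and raising the column weights on the tight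
  neighbourhood of \<open>J\<close> keeps a cover; minimality therefore forces Hall's condition.\<close>

lemma minimum_cover_hall_condition:
  assumes cover: "covers t a u v"
    and minimal: "\<And>u' v'. covers t a u' v' \<Longrightarrow>
      (\<Sum>i<t. u i) + (\<Sum>j<t. v j) \<le> (\<Sum>i<t. u' i) + (\<Sum>j<t. v' j)"
  shows "hall_condition {..<t} (\<lambda>i. {j\<in>{..<t}. int (a i j) = u i + v j})"
  unfolding hall_condition_def
proof (intro allI impI)
  fix J assume J: "J \<subseteq> {..<t}"
  define N where "N = \<Union> ((\<lambda>i. {j\<in>{..<t}. int (a i j) = u i + v j}) ` J)"
  have N: "N \<subseteq> {..<t}" unfolding N_def by auto
  define u' where "u' i = u i - of_bool (i \<in> J)" for i
  define v' where "v' j = v j + of_bool (j \<in> N)" for j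
  have "covers t a u' v'"
    using cover unfolding covers_def u'_def v'_def N_def by fastforce
  moreover have "(\<Sum>i<t. u' i) + (\<Sum>j<t. v' j)
      = (\<Sum>i<t. u i) + (\<Sum>j<t. v j) - int (card J) + int (card N)"
    using J N by (simp add: u'_def v'_def sum_subtractf sum.distrib sum_of_bool_eq Int_absorb1
        Int_absorb2 Collect_mem_eq)
  ultimately show "card J \<le> card N" using minimal[of u' v'] by linarith
qed

theorem egervary:
  "\<exists>\<sigma> u v. inj_on \<sigma> {..<t} \<and> \<sigma> ` {..<t} \<subseteq> {..<t} \<and> covers t a u v
     \<and> (\<Sum>i<t. int (a i (\<sigma> i))) = (\<Sum>i<t. u i) + (\<Sum>j<t. v j)"
proof -
  obtain u v where cover: "covers t a u v" and minimal: "\<forall>u' v'. covers t a u' v' \<longrightarrow>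
      (\<Sum>i<t. u i) + (\<Sum>j<t. v j) \<le> (\<Sum>i<t. u' i) + (\<Sum>j<t. v' j)"
    using exists_minimum_cover by blast
  obtain \<sigma> where \<sigma>: "inj_on \<sigma> {..<t}" "\<forall>i<t. \<sigma> i < t \<and> int (a i (\<sigma> i)) = u i + v (\<sigma> i)"
    using hall_marriage[OF _ _ minimum_cover_hall_condition[OF cover]] minimal by auto
  then have onto: "\<sigma> ` {..<t} = {..<t}"
    by (intro endo_inj_surj) auto
  have "(\<Sum>i<t. int (a i (\<sigma> i))) = (\<Sum>i<t. u i) + (\<Sum>i<t. v (\<sigma> i))"
    using \<sigma>(2) by (simp add: sum.distrib)
  also have "(\<Sum>i<t. v (\<sigma> i)) = (\<Sum>j<t. v j)"
    using sum.reindex[OF \<sigma>(1), of v] onto by simp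
  finally show ?thesis using \<sigma> cover onto by blast
qed

section \<open>Transversals, covers and cyclically filled matrices\<close>

lemma finite_transversal_sums:
  fixes A :: "nat \<Rightarrow> nat \<Rightarrow> nat"
  shows "finite {(\<Sum>i<s. A i (f i)) | f. inj_on f {..<s} \<and> f ` {..<s} \<subseteq> {..<t}}"
proof (rule finite_subset)
  show "{(\<Sum>i<s. A i (f i)) | f. inj_on f {..<s} \<and> f ` {..<s} \<subseteq> {..<t}}
      \<subseteq> {..(\<Sum>i<s. \<Sum>j<t. A i j)}"
    by (force intro!: sum_mono member_le_sum)
qed simp

lemma tdet_ge_transversal:
  assumes "s \<le> t" "inj_on f {..<s}" "f ` {..<s} \<subseteq> {..<t}"
  shows "(\<Sum>i<s. A i (f i)) \<le> tdet s t A"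
  unfolding tdet_def using assms finite_transversal_sums by (auto intro!: Max_ge)

lemma tdet_le_cover:
  fixes U V :: "nat \<Rightarrow> nat"
  assumes "s \<le> t" "\<And>i j. i < s \<Longrightarrow> j < t \<Longrightarrow> A i j \<le> U i + V j"
  shows "tdet s t A \<le> (\<Sum>i<s. U i) + (\<Sum>j<t. V j)"
proof -
  have "(\<Sum>i<s. A i (f i)) \<le> (\<Sum>i<s. U i) + (\<Sum>j<t. V j)"
    if f: "inj_on f {..<s}" "f ` {..<s} \<subseteq> {..<t}" for f
  proof -
    have "(\<Sum>i<s. A i (f i)) \<le> (\<Sum>i<s. U i + V (f i))"
      using f(2) assms(2) by (intro sum_mono) auto
    also have "\<dots> = (\<Sum>i<s. U i) + (\<Sum>j\<in>f ` {..<s}. V j)"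
      using sum.reindex[OF f(1), of V] by (simp add: sum.distrib)
    also have "\<dots> \<le> (\<Sum>i<s. U i) + (\<Sum>j<t. V j)" using f(2) by (simp add: sum_mono2)
    finally show ?thesis .
  qed
  moreover have "{(\<Sum>i<s. A i (f i)) | f. inj_on f {..<s} \<and> f ` {..<s} \<subseteq> {..<t}} \<noteq> {}"
    using assms(1) by (auto intro!: exI[of _ id])
  ultimately show ?thesis
    unfolding tdet_def using assms(1) by (auto simp: Max_le_iff[OF finite_transversal_sums])
qed

text \<open>Since the rows \<open>i \<ge> s\<close> vanish, an optimal permutation of the padded square matrix
  restricts to a transversal of \<open>A\<close> of the same weight.\<close>

lemma tdet_ge_cover_weight:
  assumes "s \<le> t" and zero: "\<And>i j. s \<le> i \<Longrightarrow> A i j = 0"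
  obtains u v where "covers t A u v" "(\<Sum>i<t. u i) + (\<Sum>j<t. v j) \<le> int (tdet s t A)"
proof -
  obtain \<sigma> u v where \<sigma>: "inj_on \<sigma> {..<t}" "\<sigma> ` {..<t} \<subseteq> {..<t}" and "covers t A u v"
    and weight: "(\<Sum>i<t. int (A i (\<sigma> i))) = (\<Sum>i<t. u i) + (\<Sum>j<t. v j)"
    using egervary by blast
  have "(\<Sum>i<t. A i (\<sigma> i)) = (\<Sum>i<s. A i (\<sigma> i))"
    using zero \<open>s \<le> t\<close> by (intro sum.mono_neutral_right) auto
  also have "\<dots> \<le> tdet s t A"
    using \<sigma> \<open>s \<le> t\<close> by (intro tdet_ge_transversal) (auto intro: inj_on_subset simp: image_subset_iff)
  finally show ?thesis using that \<open>covers t A u v\<close> weight by (simp flip: of_nat_sum)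
qed

text \<open>Row \<open>i\<close> deals \<open>\<rho> i\<close> units cyclically into the first \<open>y\<close> columns and \<open>R - \<rho> i\<close> units
  cyclically into the remaining \<open>t - y\<close> columns, each row resuming where the previous one
  stopped; so every column of a block receives the same amount.\<close>

definition cyclic_fill :: "nat \<Rightarrow> nat \<Rightarrow> nat \<Rightarrow> nat \<Rightarrow> (nat \<Rightarrow> nat) \<Rightarrow> nat \<Rightarrow> nat \<Rightarrow> nat" where
  "cyclic_fill s t y R \<rho> i j =
     (if i < s \<and> j < y then wrap_count (prefix_sum \<rho> i) (\<rho> i) y j
      else if i < s \<and> y \<le> j \<and> j < t then
        wrap_count (prefix_sum (\<lambda>i. R - \<rho> i) i) (R - \<rho> i) (t - y) (j - y)
      else 0)"

lemma cyclic_fill_outside: "s \<le> i \<or> t \<le> j \<Longrightarrow> y < t \<Longrightarrow> cyclic_fill s t y R \<rho> i j = 0"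
  unfolding cyclic_fill_def by auto

lemma sum_cyclic_fill_row:
  assumes "y < t" "i < s" "\<rho> i \<le> R" "y = 0 \<Longrightarrow> \<rho> i = 0"
  shows "(\<Sum>j<t. cyclic_fill s t y R \<rho> i j) = R"
proof -
  have "(\<Sum>j<t. cyclic_fill s t y R \<rho> i j)
      = (\<Sum>j<y. cyclic_fill s t y R \<rho> i j) + (\<Sum>j\<in>{y..<t}. cyclic_fill s t y R \<rho> i j)"
    using assms(1) by (simp add: lessThan_atLeast0 sum.atLeastLessThan_concat)
  also have "(\<Sum>j<y. cyclic_fill s t y R \<rho> i j) = \<rho> i"
    using assms(2,4) by (cases "y = 0") (simp_all add: cyclic_fill_def sum_wrap_count)
  also have "(\<Sum>j\<in>{y..<t}. cyclic_fill s t y R \<rho> i j)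
      = (\<Sum>j<t - y. wrap_count (prefix_sum (\<lambda>i. R - \<rho> i) i) (R - \<rho> i) (t - y) j)"
    using assms(2) by (subst sum.atLeastLessThan_shift_0)
      (auto intro!: sum.cong simp: cyclic_fill_def lessThan_atLeast0)
  also have "\<dots> = R - \<rho> i" using assms(1) by (simp add: sum_wrap_count)
  finally show ?thesis using assms(3) by simp
qed

lemma sum_cyclic_fill_column:
  assumes "y < t" "j < t" "\<forall>i<s. \<rho> i \<le> R" "(\<Sum>i<s. \<rho> i) = y * C" "s * R = t * C"
  shows "(\<Sum>i<s. cyclic_fill s t y R \<rho> i j) = C"
proof (cases "j < y")
  case True
  then have "(\<Sum>i<s. cyclic_fill s t y R \<rho> i j) = wrap_count 0 (C * y) y j"
    using assms(4) by (simp add: cyclic_fill_def sum_wrap_count_prefix_sum mult.commute)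
  with True show ?thesis by (simp add: wrap_count_periods)
next
  case False
  have "(\<Sum>i<s. R - \<rho> i) = s * R - y * C"
    using assms(3,4) by (subst sum_subtractf_nat) auto
  also have "\<dots> = C * (t - y)" using assms(5) by (simp add: right_diff_distrib' mult.commute)
  finally have "(\<Sum>i<s. cyclic_fill s t y R \<rho> i j) = wrap_count 0 (C * (t - y)) (t - y) (j - y)"
    using False assms(2) by (simp add: cyclic_fill_def sum_wrap_count_prefix_sum)
  with False assms(2) show ?thesis by (simp add: wrap_count_periods)
qed

lemma cyclic_fill_in_Dset:
  assumes "y < n * l" "\<forall>i<n * k. \<rho> i \<le> m * l" "(\<Sum>i<n * k. \<rho> i) = y * (m * k)"
  shows "cyclic_fill (n * k) (n * l) y (m * l) \<rho> \<in> Dset k l m n"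
proof -
  have "n * k * (m * l) = n * l * (m * k)" by simp
  moreover have "\<rho> i = 0" if "y = 0" "i < n * k" for i
    using assms(3) that by simp
  ultimately show ?thesis
    unfolding Dset_def using assms
    by (auto simp: cyclic_fill_outside sum_cyclic_fill_row sum_cyclic_fill_column)
qed

text \<open>Covered by \<open>U i\<close> on row \<open>i\<close>, \<open>1\<close> on each of the first \<open>y\<close> columns and \<open>0\<close> elsewhere.\<close>

lemma tdet_cyclic_fill_le:
  assumes "s \<le> t" "y < t"
    and loads: "\<And>i. i < s \<Longrightarrow> \<rho> i \<le> (U i + 1) * y \<and> R - \<rho> i \<le> U i * (t - y)"
  shows "tdet s t (cyclic_fill s t y R \<rho>) \<le> (\<Sum>i<s. U i) + y"
proof -
  have "{..<t} \<inter> {j. j < y} = {..<y}" using assms(2) by auto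
  then have columns: "(\<Sum>j<t. of_bool (j < y) :: nat) = y" by (simp add: sum_of_bool_eq)
  have "tdet s t (cyclic_fill s t y R \<rho>) \<le> (\<Sum>i<s. U i) + (\<Sum>j<t. of_bool (j < y))"
  proof (rule tdet_le_cover[OF assms(1)])
    fix i j assume "i < s" "j < t"
    with loads[of i] assms(2) show "cyclic_fill s t y R \<rho> i j \<le> U i + of_bool (j < y)"
      by (auto simp: cyclic_fill_def intro: wrap_count_le)
  qed
  then show ?thesis by (simp only: columns)
qed

lemma finite_Dset: "finite (Dset k l m n)"
proof -
  define s where "s = n * k"
  define t where "t = n * l"
  define B where "B = {A. \<forall>i j. (s \<le> i \<or> t \<le> j \<longrightarrow> A i j = 0) \<and> A i j \<le> m * l}"
  have "Dset k l m n \<subseteq> B"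
  proof
    fix A assume A: "A \<in> Dset k l m n"
    have "A i j \<le> m * l" for i j
    proof (cases "i < s \<and> j < t")
      case True
      then have "A i j \<le> (\<Sum>j<t. A i j)" by (intro member_le_sum) auto
      with A True show ?thesis unfolding Dset_def s_def t_def by auto
    next
      case False
      with A show ?thesis unfolding Dset_def s_def t_def by auto
    qed
    with A show "A \<in> B" unfolding B_def Dset_def s_def t_def by auto
  qed
  moreover have "finite B"
  proof (rule finite_imageD)
    define F where "F A = restrict (case_prod A) ({..<s} \<times> {..<t})" for A :: "nat \<Rightarrow> nat \<Rightarrow> nat"
    have "F ` B \<subseteq> PiE ({..<s} \<times> {..<t}) (\<lambda>_. {..m * l})"
      unfolding B_def F_def by (auto split: if_splits)
    then show "finite (F ` B)" by (rule finite_subset) (intro finite_PiE, auto)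
    show "inj_on F B"
    proof (rule inj_onI, intro ext)
      fix A A' i j
      assume "A \<in> B" "A' \<in> B" "F A = F A'"
      then show "A i j = A' i j" unfolding B_def F_def
        by (cases "i < s \<and> j < t") (auto dest: fun_cong[where x = "(i, j)"])
    qed
  qed
  ultimately show ?thesis by (rule finite_subset)
qed

section \<open>The lower bound\<close>

definition feasible :: "nat \<Rightarrow> nat \<Rightarrow> nat \<Rightarrow> nat \<Rightarrow> nat \<Rightarrow> int \<Rightarrow> int \<Rightarrow> bool" where
  "feasible k l n q r x y \<longleftrightarrow>
     int q * x * y + int r * (x * int l + y * int k) \<ge> int (k * l * n * r)
     \<and> x \<ge> int (r * k) \<and> y \<ge> int (r * l)"

lemma feasible_nonneg: "feasible k l n q r x y \<Longrightarrow> 0 \<le> x \<and> 0 \<le> y"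
  unfolding feasible_def by (meson of_nat_0_le_iff order_trans)

lemma feasible_whole: "r \<le> n \<Longrightarrow> feasible k l n q r (int (n * k)) (int (n * l))"
  unfolding feasible_def by (simp add: algebra_simps mult_left_mono)

lemma quadratic_constraint_mono:
  fixes x y x' y' :: int
  assumes "0 \<le> x'" "0 \<le> y'" "x' \<le> x" "y' \<le> y"
  shows "int q * x' * y' + int r * (x' * int l + y' * int k)
      \<le> int q * x * y + int r * (x * int l + y * int k)"
proof -
  have "int q * x' * y' \<le> int q * x * y"
    using assms by (simp add: mult_left_mono mult_mono mult.assoc)
  moreover have "x' * int l + y' * int k \<le> x * int l + y * int k"
    using assms by (intro add_mono mult_right_mono) auto
  ultimately show ?thesis by (simp add: add_mono mult_left_mono)
qed

lemma card_positive_le_sum: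
  fixes f :: "'a \<Rightarrow> int"
  assumes "finite A" "\<forall>a\<in>A. 0 \<le> f a"
  shows "int (card {a\<in>A. 0 < f a}) \<le> sum f A"
proof -
  have "int (card {a\<in>A. 0 < f a}) = (\<Sum>a\<in>{a\<in>A. 0 < f a}. 1)" by simp
  also have "\<dots> \<le> (\<Sum>a\<in>{a\<in>A. 0 < f a}. f a)" by (intro sum_mono) auto
  also have "\<dots> \<le> sum f A" using assms by (intro sum_mono2) auto
  finally show ?thesis .
qed

lemma block_sum_bound:
  fixes A :: "nat \<Rightarrow> nat \<Rightarrow> nat"
  assumes "I \<subseteq> {..<s}" "J \<subseteq> {..<t}"
    and rows: "\<forall>i\<in>I. (\<Sum>j<t. A i j) = R" and cols: "\<forall>j<t. (\<Sum>i<s. A i j) = C"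
    and block: "\<forall>i\<in>I. \<forall>j\<in>J. A i j \<le> c"
  shows "card I * R \<le> card I * card J * c + card ({..<t} - J) * C"
proof -
  have "card I * R = (\<Sum>i\<in>I. \<Sum>j<t. A i j)" using rows by simp
  also have "\<dots> = (\<Sum>i\<in>I. \<Sum>j\<in>J. A i j) + (\<Sum>i\<in>I. \<Sum>j\<in>{..<t} - J. A i j)"
    using assms(2) by (simp add: sum.subset_diff[of J "{..<t}"] sum.distrib)
  also have "(\<Sum>i\<in>I. \<Sum>j\<in>J. A i j) \<le> card I * card J * c"
    using block sum_bounded_above[of J "A _" c] sum_bounded_above[of I _ "card J * c"]
    by (simp add: mult.assoc)
  also have "(\<Sum>i\<in>I. \<Sum>j\<in>{..<t} - J. A i j) \<le> (\<Sum>i<s. \<Sum>j\<in>{..<t} - J. A i j)"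
    using assms(1) by (intro sum_mono2) auto
  also have "\<dots> = (\<Sum>j\<in>{..<t} - J. \<Sum>i<s. A i j)" by (rule sum.swap)
  also have "\<dots> = card ({..<t} - J) * C" using cols by simp
  finally show ?thesis by simp
qed

lemma quadratic_constraint_of_block_bound:
  fixes x y :: int
  assumes "m = q * n + r"
    and "(int (n * k) - x) * int (m * l)
      \<le> (int (n * k) - x) * (int (n * l) - y) * int q + y * int (m * k)"
  shows "int q * x * y + int r * (x * int l + y * int k) \<ge> int (k * l * n * r)"
proof -
  have "(int (n * k) - x) * int (m * l) - ((int (n * k) - x) * (int (n * l) - y) * int q + y * int (m * k))
      = int (k * l * n * r) - (int q * x * y + int r * (x * int l + y * int k))"
    unfolding assms(1) by (simp add: algebra_simps)
  with assms(2) show ?thesis by linarith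
qed

text \<open>Shifting the row weights by the least column weight \<open>b\<close> and the fixed amount \<open>c\<close>; the zero
  rows \<open>s \<le> i < t\<close> of the padded matrix have \<open>u i \<ge> -b\<close>, so dropping them costs nothing.\<close>

lemma shifted_cover:
  fixes A :: "nat \<Rightarrow> nat \<Rightarrow> nat" and c :: nat
  assumes "s \<le> t" "0 < t" and zero: "\<And>i j. s \<le> i \<Longrightarrow> A i j = 0" and cover: "covers t A u v"
  obtains \<alpha> \<beta> j0 where "j0 < t" "\<beta> j0 = 0" "\<forall>j<t. 0 \<le> \<beta> j"
    "\<forall>i<s. \<forall>j<t. int (A i j) \<le> int c + \<alpha> i + \<beta> j"
    "int (s * c) + (\<Sum>i<s. \<alpha> i) + (\<Sum>j<t. \<beta> j) \<le> (\<Sum>i<t. u i) + (\<Sum>j<t. v j)"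
proof -
  define b where "b = Min (v ` {..<t})"
  have "b \<in> v ` {..<t}" unfolding b_def using \<open>0 < t\<close> by (intro Min_in) auto
  then obtain j0 where j0: "j0 < t" "v j0 = b" by auto
  have b_le: "b \<le> v j" if "j < t" for j unfolding b_def using that by simp
  define \<alpha> where "\<alpha> i = u i + b - int c" for i
  define \<beta> where "\<beta> j = v j - b" for j
  have "- b \<le> u i" if "i \<in> {s..<t}" for i
    using cover j0 zero[of i j0] that unfolding covers_def by force
  then have "int (t - s) * (- b) \<le> (\<Sum>i\<in>{s..<t}. u i)"
    using sum_mono[of "{s..<t}" "\<lambda>_. - b" u] by simp
  moreover have "(\<Sum>i<t. u i) = (\<Sum>i<s. u i) + (\<Sum>i\<in>{s..<t}. u i)"
    using \<open>s \<le> t\<close> by (simp add: lessThan_atLeast0 sum.atLeastLessThan_concat)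
  ultimately have "int (s * c) + (\<Sum>i<s. \<alpha> i) + (\<Sum>j<t. \<beta> j) \<le> (\<Sum>i<t. u i) + (\<Sum>j<t. v j)"
    using \<open>s \<le> t\<close> by (simp add: \<alpha>_def \<beta>_def sum.distrib sum_subtractf algebra_simps)
  moreover have "\<forall>i<s. \<forall>j<t. int (A i j) \<le> int c + \<alpha> i + \<beta> j"
    using cover \<open>s \<le> t\<close> unfolding covers_def \<alpha>_def \<beta>_def by force
  ultimately show ?thesis using that[of j0 \<beta> \<alpha>] j0 b_le by (simp add: \<beta>_def)
qed

text \<open>Rows and columns of weight zero span a block with entries at most \<open>q\<close>; comparing row and
  column sums through this block gives the quadratic constraint for the numbers of rows and
  columns of positive weight.\<close>

lemma feasible_of_shifted_cover:
  fixes A :: "nat \<Rightarrow> nat \<Rightarrow> nat" and \<alpha> \<beta> :: "nat \<Rightarrow> int"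
  assumes D: "A \<in> Dset k l m n" and m: "m = q * n + r"
    and cover: "\<forall>i<n * k. \<forall>j<n * l. int (A i j) \<le> int q + \<alpha> i + \<beta> j"
    and \<alpha>: "\<forall>i<n * k. 0 \<le> \<alpha> i" and \<beta>: "\<forall>j<n * l. 0 \<le> \<beta> j"
    and bounds: "int (r * k) \<le> (\<Sum>i<n * k. \<alpha> i)" "int (r * l) \<le> (\<Sum>j<n * l. \<beta> j)"
  shows "feasible k l n q r (\<Sum>i<n * k. \<alpha> i) (\<Sum>j<n * l. \<beta> j)"
proof -
  define I where "I = {i\<in>{..<n * k}. \<alpha> i = 0}"
  define J where "J = {j\<in>{..<n * l}. \<beta> j = 0}"
  define x where "x = int (card {i\<in>{..<n * k}. 0 < \<alpha> i})"
  define y where "y = int (card {j\<in>{..<n * l}. 0 < \<beta> j})"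
  have "I \<subseteq> {..<n * k}" "J \<subseteq> {..<n * l}" unfolding I_def J_def by auto
  then have "card ({..<n * k} - I) = n * k - card I" "card I \<le> n * k"
    "card ({..<n * l} - J) = n * l - card J" "card J \<le> n * l"
    using card_mono[of "{..<n * k}" I] card_mono[of "{..<n * l}" J]
    by (simp_all add: card_Diff_subset finite_subset)
  moreover have "{i\<in>{..<n * k}. 0 < \<alpha> i} = {..<n * k} - I" "{j\<in>{..<n * l}. 0 < \<beta> j} = {..<n * l} - J"
    using \<alpha> \<beta> unfolding I_def J_def by force+
  ultimately have cards: "int (card I) = int (n * k) - x" "int (card J) = int (n * l) - y"
    "int (card ({..<n * l} - J)) = y"
    unfolding x_def y_def by simp_all
  have "card I * (m * l) \<le> card I * card J * q + card ({..<n * l} - J) * (m * k)"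
  proof (rule block_sum_bound)
    show "\<forall>i\<in>I. \<forall>j\<in>J. A i j \<le> q" using cover unfolding I_def J_def by fastforce
  qed (use D in \<open>auto simp: I_def J_def Dset_def\<close>)
  then have "int (card I) * int (m * l)
      \<le> int (card I) * int (card J) * int q + int (card ({..<n * l} - J)) * int (m * k)"
    by (metis of_nat_add of_nat_le_iff of_nat_mult)
  then have "(int (n * k) - x) * int (m * l) \<le> (int (n * k) - x) * (int (n * l) - y) * int q + y * int (m * k)"
    unfolding cards .
  then have "int q * x * y + int r * (x * int l + y * int k) \<ge> int (k * l * n * r)"
    by (rule quadratic_constraint_of_block_bound[OF m])
  moreover have "x \<le> (\<Sum>i<n * k. \<alpha> i)" "y \<le> (\<Sum>j<n * l. \<beta> j)"
    unfolding x_def y_def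
    using card_positive_le_sum[of "{..<n * k}" \<alpha>] card_positive_le_sum[of "{..<n * l}" \<beta>] \<alpha> \<beta>
    by auto
  moreover have "0 \<le> x" "0 \<le> y" by (simp_all add: x_def y_def)
  ultimately show ?thesis
    using quadratic_constraint_mono[where x' = x and y' = y and x = "\<Sum>i<n * k. \<alpha> i"
        and y = "\<Sum>j<n * l. \<beta> j" and q = q and r = r and k = k and l = l] bounds
    unfolding feasible_def by linarith
qed

lemma column_margin_le_shifted_cover:
  fixes A :: "nat \<Rightarrow> nat \<Rightarrow> nat" and \<alpha> \<beta> :: "nat \<Rightarrow> int"
  assumes D: "A \<in> Dset k l m n" and m: "m = q * n + r"
    and cover: "\<forall>i<n * k. \<forall>j<n * l. int (A i j) \<le> int q + \<alpha> i + \<beta> j"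
    and "j < n * l" "\<beta> j = 0"
  shows "int (r * k) \<le> (\<Sum>i<n * k. \<alpha> i)"
proof -
  have "int (m * k) = (\<Sum>i<n * k. int (A i j))"
    using D \<open>j < n * l\<close> unfolding Dset_def by (simp flip: of_nat_sum)
  also have "\<dots> \<le> (\<Sum>i<n * k. int q + \<alpha> i)"
    using cover \<open>j < n * l\<close> \<open>\<beta> j = 0\<close> by (intro sum_mono) fastforce
  finally show ?thesis unfolding m by (simp add: sum.distrib algebra_simps)
qed

lemma row_margin_le_shifted_cover:
  fixes A :: "nat \<Rightarrow> nat \<Rightarrow> nat" and \<alpha> \<beta> :: "nat \<Rightarrow> int"
  assumes D: "A \<in> Dset k l m n" and m: "m = q * n + r"
    and cover: "\<forall>i<n * k. \<forall>j<n * l. int (A i j) \<le> int q + \<alpha> i + \<beta> j" and "i < n * k"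
  shows "int (r * l) \<le> int (n * l) * \<alpha> i + (\<Sum>j<n * l. \<beta> j)"
proof -
  have "int (m * l) = (\<Sum>j<n * l. int (A i j))"
    using D \<open>i < n * k\<close> unfolding Dset_def by (simp flip: of_nat_sum)
  also have "\<dots> \<le> (\<Sum>j<n * l. int q + \<alpha> i + \<beta> j)"
    using cover \<open>i < n * k\<close> by (intro sum_mono) auto
  finally show ?thesis unfolding m by (simp add: sum.distrib algebra_simps)
qed

lemma min_le_shifted_cover_weight:
  fixes A :: "nat \<Rightarrow> nat \<Rightarrow> nat" and \<alpha> \<beta> :: "nat \<Rightarrow> int"
  assumes "k \<le> l" and D: "A \<in> Dset k l m n" and m: "m = q * n + r"
    and cover: "\<forall>i<n * k. \<forall>j<n * l. int (A i j) \<le> int q + \<alpha> i + \<beta> j"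
    and "j0 < n * l" "\<beta> j0 = 0" and \<beta>: "\<forall>j<n * l. 0 \<le> \<beta> j"
    and S: "\<And>x y. feasible k l n q r x y \<Longrightarrow> S \<le> x + y"
  shows "min (int (n * k)) S \<le> (\<Sum>i<n * k. \<alpha> i) + (\<Sum>j<n * l. \<beta> j)"
proof -
  define X where "X = (\<Sum>i<n * k. \<alpha> i)"
  define Y where "Y = (\<Sum>j<n * l. \<beta> j)"
  have "0 \<le> Y" unfolding Y_def using \<beta> by (auto intro: sum_nonneg)
  have "int (r * k) \<le> X"
    unfolding X_def by (rule column_margin_le_shifted_cover[OF D m cover \<open>j0 < n * l\<close> \<open>\<beta> j0 = 0\<close>])
  have row: "int (r * l) \<le> int (n * l) * \<alpha> i + Y" if "i < n * k" for i
    unfolding Y_def by (rule row_margin_le_shifted_cover[OF D m cover that])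
  consider (negative) i where "i < n * k" "\<alpha> i < 0" | (positive) "\<forall>i<n * k. 1 \<le> \<alpha> i"
    | (zero) i where "i < n * k" "\<alpha> i = 0" "\<forall>i<n * k. 0 \<le> \<alpha> i"
  proof (cases "\<exists>i<n * k. \<alpha> i < 0")
    case nonneg: False
    show ?thesis
    proof (cases "\<forall>i<n * k. 1 \<le> \<alpha> i")
      case False
      then obtain i where "i < n * k" "\<alpha> i < 1" by auto
      with nonneg show ?thesis using that(3)[of i] by force
    qed (use that(2) in blast)
  qed (use that(1) in blast)
  then have "min (int (n * k)) S \<le> X + Y"
  proof cases
    case negative
    then have "int (n * l) * \<alpha> i \<le> int (n * l) * (- 1)" by (intro mult_left_mono) auto
    with row[OF negative(1)] have "int (n * l) \<le> Y" by linarith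
    moreover have "n * k \<le> n * l" using \<open>k \<le> l\<close> by simp
    ultimately show ?thesis using \<open>int (r * k) \<le> X\<close> by linarith
  next
    case positive
    then have "(\<Sum>i<n * k. 1) \<le> X" unfolding X_def by (intro sum_mono) auto
    with \<open>0 \<le> Y\<close> show ?thesis by simp
  next
    case zero
    with row[of i] have "int (r * l) \<le> Y" by simp
    with zero \<open>int (r * k) \<le> X\<close> have "feasible k l n q r X Y"
      unfolding X_def Y_def by (intro feasible_of_shifted_cover[OF D m cover _ \<beta>]) auto
    then show ?thesis using S by (simp add: min.coboundedI2)
  qed
  then show ?thesis unfolding X_def Y_def .
qed

theorem tdet_Dset_lower_bound:
  fixes A :: "nat \<Rightarrow> nat \<Rightarrow> nat"
  assumes "0 < k" "k \<le> l" "1 \<le> n" and D: "A \<in> Dset k l m n" and m: "m = q * n + r"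
    and S: "\<And>x y. feasible k l n q r x y \<Longrightarrow> S \<le> x + y"
  shows "int (n * k * q) + min (int (n * k)) S \<le> int (tdet (n * k) (n * l) A)"
proof -
  have "n * k \<le> n * l" "0 < n * l" using assms(1-3) by simp_all
  have zero: "\<And>i j. n * k \<le> i \<Longrightarrow> A i j = 0" using D unfolding Dset_def by auto
  obtain u v where "covers (n * l) A u v"
    and weight: "(\<Sum>i<n * l. u i) + (\<Sum>j<n * l. v j) \<le> int (tdet (n * k) (n * l) A)"
    by (rule tdet_ge_cover_weight[OF \<open>n * k \<le> n * l\<close> zero])
  obtain \<alpha> \<beta> j0 where shifted: "j0 < n * l" "\<beta> j0 = 0" "\<forall>j<n * l. 0 \<le> \<beta> j"
    "\<forall>i<n * k. \<forall>j<n * l. int (A i j) \<le> int q + \<alpha> i + \<beta> j"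
    and shifted_weight: "int (n * k * q) + (\<Sum>i<n * k. \<alpha> i) + (\<Sum>j<n * l. \<beta> j)
      \<le> (\<Sum>i<n * l. u i) + (\<Sum>j<n * l. v j)"
    by (rule shifted_cover[OF \<open>n * k \<le> n * l\<close> \<open>0 < n * l\<close> zero \<open>covers (n * l) A u v\<close>])
  have "min (int (n * k)) S \<le> (\<Sum>i<n * k. \<alpha> i) + (\<Sum>j<n * l. \<beta> j)"
    using min_le_shifted_cover_weight[OF \<open>k \<le> l\<close> D m shifted(4,1,2,3) S] .
  with shifted_weight weight show ?thesis by linarith
qed

section \<open>The upper bound\<close>

definition slack :: "nat \<Rightarrow> nat \<Rightarrow> nat \<Rightarrow> nat \<Rightarrow> nat \<Rightarrow> int \<Rightarrow> int \<Rightarrow> int" where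
  "slack k l n q r x y = int q * x * y + int r * (x * int l + y * int k) - int (k * l * n * r)"

lemma slack_identities:
  fixes x y :: int
  assumes "m = q * n + r"
  shows "slack k l n q r x y + (int (n * k) - x) * (int (r * l) + int q * y) = y * int (m * k)"
    and "x * int (m * l) - slack k l n q r x y = (int (n * l) - y) * (int q * x + int (r * k))"
    and "slack k l n q r x y + x * ((int q + 1) * (int (n * l) - y)) - x * int (m * l)
      = (int (n * l) - y) * (x - int (r * k))"
  by (simp_all add: assms slack_def algebra_simps)

text \<open>If \<open>x\<close> cannot be decreased, the slack is less than the cost \<open>q y + r l\<close> of decreasing it.\<close>

lemma slack_le_of_tight:
  fixes x y :: int
  assumes "r < n" and feas: "feasible k l n q r x y"
    and tight: "int (r * k) < x \<Longrightarrow> \<not> feasible k l n q r (x - 1) y"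
  shows "slack k l n q r x y \<le> x * ((int q + 2) * y)"
proof -
  have "0 \<le> x" "0 \<le> y" "int (r * l) \<le> y" using feas feasible_nonneg unfolding feasible_def by auto
  show ?thesis
  proof (cases "x = int (r * k)")
    case True
    have "slack k l n q r x y = int (r * k) * (int q * y + y) - int (r * k) * (int (n * l) - int (r * l))"
      unfolding True slack_def by (simp add: algebra_simps)
    moreover have "0 \<le> int (r * k) * (int (n * l) - int (r * l))"
      using \<open>r < n\<close> by (intro mult_nonneg_nonneg) (simp_all add: mult_right_mono)
    ultimately have "slack k l n q r x y \<le> int (r * k) * (int q * y + y)" by linarith
    also have "\<dots> \<le> x * ((int q + 2) * y)" using True \<open>0 \<le> y\<close> by (simp add: algebra_simps)
    finally show ?thesis .
  next
    case False
    then have "int (r * k) < x" using feas unfolding feasible_def by simp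
    with tight feas have "slack k l n q r (x - 1) y < 0" unfolding feasible_def slack_def by auto
    then have "slack k l n q r x y < int q * y + int (r * l)" unfolding slack_def by (simp add: algebra_simps)
    also have "\<dots> \<le> 1 * ((int q + 2) * y)"
      using \<open>int (r * l) \<le> y\<close> \<open>0 \<le> y\<close> by (simp add: distrib_right)
    also have "\<dots> \<le> x * ((int q + 2) * y)"
    proof (rule mult_right_mono)
      have "0 \<le> int (r * k)" by (rule of_nat_0_le_iff)
      with \<open>int (r * k) < x\<close> show "1 \<le> x" by linarith
    qed (use \<open>0 \<le> y\<close> in simp)
    finally show ?thesis by simp
  qed
qed

lemma slack_nat_bounds:
  fixes x y :: nat
  assumes m: "m = q * n + r" and "r < n" and feas: "feasible k l n q r (int x) (int y)"
    and tight: "r * k < x \<Longrightarrow> \<not> feasible k l n q r (int x - 1) (int y)"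
    and "x \<le> n * k" "y \<le> n * l"
  obtains D where "D + (n * k - x) * (r * l + q * y) = y * (m * k)"
    "x * (m * l) \<le> D + x * ((q + 1) * (n * l - y))" "D \<le> x * ((q + 2) * y)" "D \<le> x * (m * l)"
proof -
  define D where "D = slack k l n q r (int x) (int y)"
  have "0 \<le> D" using feas unfolding feasible_def slack_def D_def by simp
  then have D: "int (nat D) = D" by simp
  have "int y \<le> int (n * l)" using \<open>y \<le> n * l\<close> by (simp only: of_nat_le_iff)
  note identities = slack_identities[OF m, where x = "int x" and y = "int y" and k = k and l = l, folded D_def]
  have "int (nat D + (n * k - x) * (r * l + q * y)) = int (y * (m * k))"
    using identities(1) \<open>x \<le> n * k\<close> D by (simp add: of_nat_diff)
  then have sum: "nat D + (n * k - x) * (r * l + q * y) = y * (m * k)" by (simp only: of_nat_eq_iff)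
  have lower: "x * (m * l) \<le> nat D + x * ((q + 1) * (n * l - y))"
  proof -
    have "0 \<le> (int (n * l) - int y) * (int x - int (r * k))"
      using \<open>int y \<le> int (n * l)\<close> feas unfolding feasible_def by (intro mult_nonneg_nonneg) auto
    with identities(3) have "int x * int (m * l) \<le> D + int x * ((int q + 1) * (int (n * l) - int y))"
      by linarith
    moreover have "int (nat D + x * ((q + 1) * (n * l - y)))
        = D + int x * ((int q + 1) * (int (n * l) - int y))"
      by (simp only: of_nat_add of_nat_mult of_nat_diff[OF \<open>y \<le> n * l\<close>] of_nat_1 D)
    ultimately have "int (x * (m * l)) \<le> int (nat D + x * ((q + 1) * (n * l - y)))"
      by (simp only: of_nat_mult)
    then show ?thesis by (simp only: of_nat_le_iff)
  qed
  have "int (r * k) < int x \<Longrightarrow> \<not> feasible k l n q r (int x - 1) (int y)"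
    using tight by (metis of_nat_less_iff)
  then have "D \<le> int x * ((int q + 2) * int y)"
    unfolding D_def by (rule slack_le_of_tight[OF \<open>r < n\<close> feas])
  then have "int (nat D) \<le> int (x * ((q + 2) * y))" using D by (simp add: algebra_simps)
  then have upper: "nat D \<le> x * ((q + 2) * y)" by (simp only: of_nat_le_iff)
  have "0 \<le> (int (n * l) - int y) * (int q * int x + int (r * k))"
    using \<open>int y \<le> int (n * l)\<close> by (intro mult_nonneg_nonneg) auto
  with identities(2) D have "int (nat D) \<le> int (x * (m * l))" by simp
  then have "nat D \<le> x * (m * l)" by (simp only: of_nat_le_iff)
  with sum lower upper show ?thesis by (rule that)
qed

text \<open>The first \<open>x\<close> rows share the slack as evenly as possible; every other row gets load
  \<open>r l + q y\<close>.\<close>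

lemma exists_row_loads:
  fixes x y :: nat
  assumes m: "m = q * n + r" and "r < n" and feas: "feasible k l n q r (int x) (int y)"
    and tight: "r * k < x \<Longrightarrow> \<not> feasible k l n q r (int x - 1) (int y)"
    and "x \<le> n * k" "y \<le> n * l"
  obtains \<rho> where "(\<Sum>i<n * k. \<rho> i) = y * (m * k)" "\<forall>i<n * k. \<rho> i \<le> m * l"
    "\<forall>i<x. \<rho> i \<le> (q + 2) * y \<and> m * l - \<rho> i \<le> (q + 1) * (n * l - y)"
    "\<forall>i. x \<le> i \<longrightarrow> \<rho> i \<le> (q + 1) * y \<and> m * l - \<rho> i \<le> q * (n * l - y)"
proof -
  obtain D where D: "D + (n * k - x) * (r * l + q * y) = y * (m * k)"
    "x * (m * l) \<le> D + x * ((q + 1) * (n * l - y))" "D \<le> x * ((q + 2) * y)" "D \<le> x * (m * l)"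
    using slack_nat_bounds[OF m \<open>r < n\<close> feas tight \<open>x \<le> n * k\<close> \<open>y \<le> n * l\<close>] by blast
  have "x * (m * l - (q + 1) * (n * l - y)) \<le> D" using D(2) by (simp add: diff_mult_distrib2)
  moreover have "D \<le> x * min ((q + 2) * y) (m * l)" using D(3,4) by (simp add: nat_mult_min_right)
  ultimately obtain \<rho>0 where \<rho>0: "(\<Sum>i<x. \<rho>0 i) = D"
    "\<forall>i<x. m * l - (q + 1) * (n * l - y) \<le> \<rho>0 i \<and> \<rho>0 i \<le> min ((q + 2) * y) (m * l)"
    by (rule exists_balanced_loads)
  define \<rho> where "\<rho> i = (if i < x then \<rho>0 i else r * l + q * y)" for i
  have "r * l \<le> y" using feas unfolding feasible_def by (metis of_nat_le_iff)
  have ml: "m * l = q * (n * l) + r * l" unfolding m by (simp add: algebra_simps)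
  have "(\<Sum>i<n * k. \<rho> i) = (\<Sum>i<x. \<rho> i) + (\<Sum>i\<in>{x..<n * k}. \<rho> i)"
    using \<open>x \<le> n * k\<close> by (simp add: lessThan_atLeast0 sum.atLeastLessThan_concat)
  also have "\<dots> = D + (n * k - x) * (r * l + q * y)"
    using \<rho>0(1) by (simp add: \<rho>_def)
  finally have "(\<Sum>i<n * k. \<rho> i) = y * (m * k)" using D(1) by simp
  moreover have "q * y \<le> q * (n * l)" using \<open>y \<le> n * l\<close> by simp
  then have "\<forall>i<n * k. \<rho> i \<le> m * l" using \<rho>0(2) ml by (simp add: \<rho>_def)
  moreover have "\<forall>i<x. \<rho> i \<le> (q + 2) * y \<and> m * l - \<rho> i \<le> (q + 1) * (n * l - y)"
    using \<rho>0(2) by (auto simp: \<rho>_def)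
  moreover have "\<forall>i. x \<le> i \<longrightarrow> \<rho> i \<le> (q + 1) * y \<and> m * l - \<rho> i \<le> q * (n * l - y)"
    using \<open>r * l \<le> y\<close> ml by (simp add: \<rho>_def diff_mult_distrib2)
  ultimately show ?thesis by (rule that)
qed

theorem ex_Dset_tdet_upper_bound:
  assumes "0 < k" "k \<le> l" "1 \<le> n" and m: "m = q * n + r" and "r < n"
    and feas: "feasible k l n q r x y"
    and minimal: "\<And>x' y'. feasible k l n q r x' y' \<Longrightarrow> x + y \<le> x' + y'"
  shows "\<exists>A\<in>Dset k l m n. int (tdet (n * k) (n * l) A) \<le> int (n * k * q) + min (int (n * k)) (x + y)"
proof (cases "int (n * k) \<le> x + y")
  case True
  let ?A = "cyclic_fill (n * k) (n * l) 0 (m * l) (\<lambda>_. 0)"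
  have "0 < n * l" "n * k \<le> n * l" using assms(1-3) by simp_all
  then have "?A \<in> Dset k l m n" by (intro cyclic_fill_in_Dset) auto
  moreover have "m * l \<le> (q + 1) * (n * l)" using m \<open>r < n\<close> by (simp add: algebra_simps)
  with \<open>0 < n * l\<close> \<open>n * k \<le> n * l\<close> have "tdet (n * k) (n * l) ?A \<le> (\<Sum>i<n * k. q + 1) + 0"
    by (intro tdet_cyclic_fill_le) auto
  then have "int (tdet (n * k) (n * l) ?A) \<le> int (n * k * q + n * k)"
    by (simp only: of_nat_le_iff) (simp add: algebra_simps)
  ultimately show ?thesis using True by (intro bexI[of _ ?A]) auto
next
  case False
  obtain x' y' :: nat where xy: "x = int x'" "y = int y'"
    using feasible_nonneg[OF feas] by (metis nonneg_int_cases)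
  have "x' \<le> n * k" "y' < n * l" using False xy \<open>k \<le> l\<close> mult_le_mono2[OF \<open>k \<le> l\<close>, of n] by linarith+
  have "\<not> feasible k l n q r (int x' - 1) (int y')" if "r * k < x'"
    using minimal[of "int x' - 1" "int y'"] xy by linarith
  then obtain \<rho> where \<rho>: "(\<Sum>i<n * k. \<rho> i) = y' * (m * k)" "\<forall>i<n * k. \<rho> i \<le> m * l"
    "\<forall>i<x'. \<rho> i \<le> (q + 2) * y' \<and> m * l - \<rho> i \<le> (q + 1) * (n * l - y')"
    "\<forall>i. x' \<le> i \<longrightarrow> \<rho> i \<le> (q + 1) * y' \<and> m * l - \<rho> i \<le> q * (n * l - y')"
    using exists_row_loads[OF m \<open>r < n\<close>] feas xy \<open>x' \<le> n * k\<close> \<open>y' < n * l\<close> by (metis less_imp_le)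
  let ?A = "cyclic_fill (n * k) (n * l) y' (m * l) \<rho>"
  have A: "?A \<in> Dset k l m n" using \<rho>(1,2) \<open>y' < n * l\<close> by (intro cyclic_fill_in_Dset) auto
  have "{..<n * k} \<inter> {i. i < x'} = {..<x'}" using \<open>x' \<le> n * k\<close> by auto
  then have U: "(\<Sum>i<n * k. q + of_bool (i < x')) = n * k * q + x'" by (simp add: sum.distrib sum_of_bool_eq)
  have "tdet (n * k) (n * l) ?A \<le> (\<Sum>i<n * k. q + of_bool (i < x')) + y'"
    using \<rho>(3,4) \<open>y' < n * l\<close> mult_le_mono2[OF \<open>k \<le> l\<close>, of n]
    by (intro tdet_cyclic_fill_le) (auto simp: not_less)
  then have "int (tdet (n * k) (n * l) ?A) \<le> int (n * k * q + x' + y')"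
    unfolding U by (simp only: of_nat_le_iff)
  with A False xy show ?thesis by (intro bexI[of _ ?A]) auto
qed

lemma Least_nonneg_int:
  fixes P :: "int \<Rightarrow> bool"
  assumes "P s0" and nonneg: "\<And>s. P s \<Longrightarrow> 0 \<le> s"
  shows "P (LEAST s. P s)" "\<And>s. P s \<Longrightarrow> (LEAST s. P s) \<le> s"
proof -
  obtain s1 where "P s1" and least: "\<forall>s. P s \<longrightarrow> nat s1 \<le> nat s"
    using ex_has_least_nat[of P s0 nat] \<open>P s0\<close> by blast
  then have "(LEAST s. P s) = s1" using nonneg by (intro Least_equality) (auto simp: nat_le_eq_zle)
  with \<open>P s1\<close> least nonneg show "P (LEAST s. P s)" "\<And>s. P s \<Longrightarrow> (LEAST s. P s) \<le> s"
    by (auto simp: nat_le_eq_zle)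
qed

lemma Lkl_eqI:
  assumes "\<And>A. A \<in> Dset k l m n \<Longrightarrow> T \<le> int (tdet (n * k) (n * l) A)"
    and "\<exists>A\<in>Dset k l m n. int (tdet (n * k) (n * l) A) \<le> T"
  shows "int (Lkl k l m n) = T"
proof -
  obtain A0 where "A0 \<in> Dset k l m n" "int (tdet (n * k) (n * l) A0) \<le> T" using assms(2) by blast
  moreover have "finite (tdet (n * k) (n * l) ` Dset k l m n)" using finite_Dset by simp
  ultimately have "int (Lkl k l m n) \<le> T"
    unfolding Lkl_def by (meson Min_le image_eqI of_nat_le_iff order_trans)
  moreover have "Lkl k l m n \<in> tdet (n * k) (n * l) ` Dset k l m n"
    unfolding Lkl_def using \<open>finite _\<close> \<open>A0 \<in> Dset k l m n\<close> by (intro Min_in) auto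
  then have "T \<le> int (Lkl k l m n)" using assms(1) by auto
  ultimately show ?thesis by simp
qed

theorem theorem3p4:
  fixes k l m n q r :: nat
  assumes "0 < k" and "k \<le> l" and "gcd k l = 1" and "1 \<le> n"
    and "m = q * n + r" and "r < n"
  shows "int (Lkl k l m n) =
           int (n * k * q)
           + min (int (n * k))
                 (LEAST s::int. \<exists>x y::int. s = x + y
                     \<and> int q * x * y + int r * (x * int l + y * int k) \<ge> int (k * l * n * r)
                     \<and> x \<ge> int (r * k) \<and> y \<ge> int (r * l))"
proof -
  define S where "S = (LEAST s::int. \<exists>x y. s = x + y \<and> feasible k l n q r x y)"
  have "\<exists>x y. S = x + y \<and> feasible k l n q r x y"
    and S_min: "\<And>x y. feasible k l n q r x y \<Longrightarrow> S \<le> x + y"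
    using Least_nonneg_int[of "\<lambda>s. \<exists>x y. s = x + y \<and> feasible k l n q r x y"]
      feasible_whole[OF less_imp_le[OF \<open>r < n\<close>]] feasible_nonneg
    unfolding S_def by (fastforce, fastforce)
  then obtain x y where "S = x + y" "feasible k l n q r x y" by blast
  have "int (Lkl k l m n) = int (n * k * q) + min (int (n * k)) S"
  proof (rule Lkl_eqI)
    show "int (n * k * q) + min (int (n * k)) S \<le> int (tdet (n * k) (n * l) A)"
      if "A \<in> Dset k l m n" for A
      using tdet_Dset_lower_bound[OF assms(1,2,4) that assms(5) S_min] .
    show "\<exists>A\<in>Dset k l m n. int (tdet (n * k) (n * l) A) \<le> int (n * k * q) + min (int (n * k)) S"
      using ex_Dset_tdet_upper_bound[OF assms(1,2,4-6) \<open>feasible k l n q r x y\<close>] S_min \<open>S = x + y\<close>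
      by simp
  qed
  then show ?thesis unfolding S_def feasible_def .
qed

end
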